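(* For each $n$ let $\mu_n$ be a conjugacy-invariant probability distribution on $\mathfrak{S}_n$ and let $\Sigma_n\sim\mu_n$ (all defined on a common probability space), and suppose $\mathbb{P}\big(\lim_{n\to\infty}m_1(\Sigma_n)/n=0\big)=1$. Then $\{\Sigma_n\}$ is quasi-random, in the sense that for every $k\ge1$ and every $v\in\mathfrak{S}_k$, $N_v(\Sigma_n)/\binom{n}{k}\to 1/k!$ in probability.
   Context: A probability distribution $\mu_n$ on $\mathfrak{S}_n$ is conjugacy-invariant if $\mu_n(w^{-1}\pi w)=\mu_n(\pi)$ for all $\pi,w\in\mathfrak{S}_n$. $m_1(\pi)$ is the number of fixed points of $\pi$. For $v\in\mathfrak{S}_k$ and $\pi\in\mathfrak{S}_n$, $N_v(\pi)$ is the number of index sets $i_1<\dots<i_k$ in $[n]$ such that $\pi(i_1),\dots,\pi(i_k)$ are in the same relative order as $v(1),\dots,v(k)$. *)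

theory Defs
  imports "HOL-Probability.Probability" "HOL-Combinatorics.Permutations"
begin

text \<open>Permutations of [n] are represented as functions p :: nat \<Rightarrow> nat with
  p permutes {0..<n} (0-based indexing).\<close>

definition fixed_points :: "nat \<Rightarrow> (nat \<Rightarrow> nat) \<Rightarrow> nat" where
  "fixed_points n p = card {i \<in> {0..<n}. p i = i}"

definition pattern_count :: "nat \<Rightarrow> (nat \<Rightarrow> nat) \<Rightarrow> nat \<Rightarrow> (nat \<Rightarrow> nat) \<Rightarrow> nat" where
  "pattern_count k v n p = card {f \<in> {0..<k} \<rightarrow>\<^sub>E {0..<n}.
      strict_mono_on {0..<k} f \<and>
      (\<forall>a<k. \<forall>b<k. p (f a) < p (f b) \<longleftrightarrow> v a < v b)}"

definition conj_invariant :: "'a measure \<Rightarrow> nat \<Rightarrow> ('a \<Rightarrow> nat \<Rightarrow> nat) \<Rightarrow> bool" where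
  "conj_invariant M n X \<longleftrightarrow>
     (\<forall>p w. w permutes {0..<n} \<longrightarrow>
        measure M {x \<in> space M. X x = w \<circ> p \<circ> inv w} = measure M {x \<in> space M. X x = p})"

end

theory Submission
  imports Defs
begin

text \<open>
  Write \<open>m\<close> for the law of \<open>\<Sigma>\<^sub>n\<close> and \<open>\<rho>\<^sub>n = m{q. q 0 = 0}\<close>. Conjugation invariance makes
  \<open>m{q. q x = y}\<close> depend only on whether \<open>x = y\<close>, so it is at most \<open>\<delta>\<^sub>n = \<rho>\<^sub>n + 1/(n-1)\<close>, and
  \<open>\<rho>\<^sub>n = E[m\<^sub>1(\<Sigma>\<^sub>n)/n] \<longrightarrow> 0\<close> by dominated convergence.
  Call \<open>q\<close> generic for a set \<open>X\<close> of positions if \<open>q\<close> maps \<open>X\<close> into its complement; this fails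
  with probability at most \<open>|X|\<^sup>2 \<delta>\<^sub>n\<close>. On generic permutations, conjugating by a
  permutation of \<open>X\<close> permutes the values at \<open>X\<close> without moving them, so all \<open>k!\<close> relative orders
  of these values are equally likely. Hence every occurrence of \<open>v\<close> has probability
  \<open>1/k! + O(k\<^sup>2\<delta>\<^sub>n)\<close>, and two occurrences at disjoint positions are asymptotically independent.
  Overlapping pairs are an \<open>O(k\<^sup>2/n)\<close> fraction of all pairs, so the second moment method shows
  \<open>N\<^sub>v(\<Sigma>\<^sub>n)/(n choose k) \<longrightarrow> 1/k!\<close> in probability.
\<close>

definition perms :: "nat \<Rightarrow> (nat \<Rightarrow> nat) set" where
  "perms n = {p. p permutes {0..<n}}"

lemma finite_perms [simp]: "finite (perms n)"
  unfolding perms_def by (rule finite_permutations) simp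

lemma card_perms: "card (perms n) = fact n"
  unfolding perms_def by (rule card_permutations) auto

lemma conj_in_perms:
  assumes "w \<in> perms n" "p \<in> perms n"
  shows "inv w \<circ> p \<circ> w \<in> perms n"
  using assms permutes_inv by (auto simp: perms_def intro!: permutes_compose)

definition maps_outside :: "nat set \<Rightarrow> (nat \<Rightarrow> nat) \<Rightarrow> bool" where
  "maps_outside X q \<longleftrightarrow> (\<forall>x\<in>X. q x \<notin> X)"

definition order_pattern :: "nat \<Rightarrow> (nat \<Rightarrow> nat) \<Rightarrow> (nat \<Rightarrow> nat) \<Rightarrow> (nat \<Rightarrow> nat) \<Rightarrow> bool" where
  "order_pattern k f u q \<longleftrightarrow> (\<forall>a<k. \<forall>b<k. q (f a) < q (f b) \<longleftrightarrow> u a < u b)"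

definition incr_tuples :: "nat \<Rightarrow> nat \<Rightarrow> (nat \<Rightarrow> nat) set" where
  "incr_tuples n k = {f \<in> {0..<k} \<rightarrow>\<^sub>E {0..<n}. strict_mono_on {0..<k} f}"

lemma pattern_count_eq_card:
  "pattern_count k v n q = card {f \<in> incr_tuples n k. order_pattern k f v q}"
  unfolding pattern_count_def incr_tuples_def order_pattern_def by simp

subsection \<open>Relative orders\<close>

lemma card_less_permutes:
  assumes u: "u permutes {0..<k}" and a: "a < k"
  shows "card {b \<in> {0..<k}. u b < u a} = u a"
proof -
  have "u ` {b \<in> {0..<k}. u b < u a} = {0..<u a}"
  proof
    show "{0..<u a} \<subseteq> u ` {b \<in> {0..<k}. u b < u a}"
    proof
      fix c assume c: "c \<in> {0..<u a}"
      have "u a < k" using permutes_in_image[OF u] a by simp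
      with c have "c \<in> u ` {0..<k}" using permutes_image[OF u] by simp
      with c show "c \<in> u ` {b \<in> {0..<k}. u b < u a}" by auto
    qed
  qed auto
  moreover have "inj_on u {b \<in> {0..<k}. u b < u a}"
    using permutes_inj[OF u] by (auto intro: inj_on_subset)
  ultimately show ?thesis using card_image by fastforce
qed

lemma perms_eq_if_same_order:
  assumes u: "u \<in> perms k" and u': "u' \<in> perms k"
    and same: "\<And>a b. a < k \<Longrightarrow> b < k \<Longrightarrow> u a < u b \<longleftrightarrow> u' a < u' b"
  shows "u = u'"
proof
  fix a
  have up: "u permutes {0..<k}" and u'p: "u' permutes {0..<k}" using u u' by (auto simp: perms_def)
  show "u a = u' a"
  proof (cases "a < k")
    case True
    then have "{b \<in> {0..<k}. u b < u a} = {b \<in> {0..<k}. u' b < u' a}" using same by auto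
    then show ?thesis using card_less_permutes[OF up True] card_less_permutes[OF u'p True] by simp
  qed (simp add: permutes_not_in[OF up] permutes_not_in[OF u'p])
qed

lemma exists_perm_same_order:
  fixes y :: "nat \<Rightarrow> nat"
  assumes inj: "inj_on y {0..<k}"
  shows "\<exists>u\<in>perms k. \<forall>a<k. \<forall>b<k. y a < y b \<longleftrightarrow> u a < u b"
proof -
  define u where "u a = (if a < k then card {c \<in> {0..<k}. y c < y a} else a)" for a
  have mono: "u a < u b" if "a < k" "b < k" "y a < y b" for a b
  proof -
    have "{c \<in> {0..<k}. y c < y a} \<subset> {c \<in> {0..<k}. y c < y b}" using that by auto
    then show ?thesis using that psubset_card_mono[of "{c \<in> {0..<k}. y c < y b}"] by (simp add: u_def)
  qed
  have same: "y a < y b \<longleftrightarrow> u a < u b" if "a < k" "b < k" for a b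
    using mono[OF that] mono[OF that(2,1)] inj_onD[OF inj, of a b] that
    by (metis atLeastLessThan_iff less_asym linorder_neqE_nat zero_le)
  have "inj_on u {0..<k}"
  proof (rule inj_onI, rule ccontr)
    fix a b assume ab: "a \<in> {0..<k}" "b \<in> {0..<k}" "u a = u b" "a \<noteq> b"
    then have "y a \<noteq> y b" using inj by (auto dest: inj_onD)
    then show False using same[of a b] same[of b a] ab by (auto simp: linorder_neq_iff)
  qed
  moreover have "u ` {0..<k} \<subseteq> {0..<k}"
  proof
    fix z assume "z \<in> u ` {0..<k}"
    then obtain a where a: "a < k" "z = u a" by auto
    have "card {c \<in> {0..<k}. y c < y a} \<le> card ({0..<k} - {a})" by (intro card_mono) auto
    then show "z \<in> {0..<k}" using a by (simp add: u_def)
  qed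
  ultimately have "bij_betw u {0..<k} {0..<k}"
    by (simp add: bij_betw_def endo_inj_surj)
  then have "u permutes {0..<k}" by (rule bij_imp_permutes) (simp add: u_def)
  with same show ?thesis by (auto simp: perms_def)
qed

lemma order_pattern_reindex:
  assumes t: "t permutes {0..<k}"
  shows "order_pattern k (f \<circ> t) (u \<circ> t) q \<longleftrightarrow> order_pattern k f u q"
proof -
  have "(\<forall>a<k. \<forall>b<k. P (t a) (t b)) \<longleftrightarrow> (\<forall>a\<in>t ` {0..<k}. \<forall>b\<in>t ` {0..<k}. P a b)" for P
    by auto
  from this[of "\<lambda>a b. q (f a) < q (f b) \<longleftrightarrow> u a < u b"] show ?thesis
    unfolding order_pattern_def permutes_image[OF t] by auto
qed

lemma exists_permutes_image_extending:
  assumes "inj_on f A" "t permutes A"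
  shows "\<exists>w. w permutes f ` A \<and> (\<forall>a\<in>A. w (f a) = f (t a))"
proof -
  have "bij_betw f A (f ` A)" using assms(1) by (rule inj_on_imp_bij_betw)
  from permutes_bij_inv_into[OF assms(2) this] show ?thesis
    using assms permutes_in_image
    by (intro exI[of _ "\<lambda>x. if x \<in> f ` A then f (t (inv_into A f x)) else x"]) auto
qed

lemma maps_outside_conj:
  assumes w: "w permutes X"
  shows "maps_outside X (inv w \<circ> q \<circ> w) \<longleftrightarrow> maps_outside X q"
proof -
  have iw: "inv w permutes X" using permutes_inv[OF w] .
  have "maps_outside X (inv w \<circ> q \<circ> w) \<longleftrightarrow> (\<forall>x\<in>X. q (w x) \<notin> X)"
    unfolding maps_outside_def using permutes_in_image[OF iw] by simp
  also have "\<dots> \<longleftrightarrow> (\<forall>x\<in>w ` X. q x \<notin> X)" by simp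
  finally show ?thesis by (simp add: permutes_image[OF w] maps_outside_def)
qed

lemma conj_apply_maps_outside:
  assumes w: "w permutes F" and FX: "F \<subseteq> X" and q: "maps_outside X q" and x: "x \<in> X"
  shows "(inv w \<circ> q \<circ> w) x = q (w x)"
proof -
  have "w x \<in> X" using x FX permutes_not_in[OF w] permutes_in_image[OF w] by (cases "x \<in> F") auto
  then have "q (w x) \<notin> F" using q FX by (auto simp: maps_outside_def)
  then show ?thesis using permutes_not_in[OF permutes_inv[OF w]] by simp
qed

subsection \<open>Conjugation invariant distributions on permutations\<close>

locale conj_inv_weights =
  fixes n :: nat and m :: "(nat \<Rightarrow> nat) \<Rightarrow> real"
  assumes nonneg: "\<And>p. m p \<ge> 0"
    and sum_eq_1: "(\<Sum>p\<in>perms n. m p) = 1"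
    and conj: "\<And>w p. w \<in> perms n \<Longrightarrow> m (inv w \<circ> p \<circ> w) = m p"
begin

definition Pr :: "((nat \<Rightarrow> nat) \<Rightarrow> bool) \<Rightarrow> real" where
  "Pr P = (\<Sum>p\<in>perms n. if P p then m p else 0)"

definition E :: "((nat \<Rightarrow> nat) \<Rightarrow> real) \<Rightarrow> real" where
  "E Y = (\<Sum>p\<in>perms n. m p * Y p)"

lemma Pr_eq_sum: "Pr P = (\<Sum>p\<in>{p \<in> perms n. P p}. m p)"
  unfolding Pr_def by (simp add: sum.inter_filter)

lemma Pr_nonneg: "Pr P \<ge> 0"
  unfolding Pr_def by (intro sum_nonneg) (auto simp: nonneg)

lemma Pr_mono: "(\<And>q. q \<in> perms n \<Longrightarrow> P q \<Longrightarrow> Q q) \<Longrightarrow> Pr P \<le> Pr Q"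
  unfolding Pr_def by (intro sum_mono) (auto simp: nonneg)

lemma Pr_cong: "(\<And>q. q \<in> perms n \<Longrightarrow> P q \<longleftrightarrow> Q q) \<Longrightarrow> Pr P = Pr Q"
  unfolding Pr_def by (intro sum.cong) auto

lemma Pr_True: "Pr (\<lambda>_. True) = 1"
  using sum_eq_1 by (simp add: Pr_def)

lemma Pr_le_1: "Pr P \<le> 1"
  using Pr_mono[of P "\<lambda>_. True"] Pr_True by simp

lemma Pr_split: "Pr P = Pr (\<lambda>q. P q \<and> Q q) + Pr (\<lambda>q. P q \<and> \<not> Q q)"
  unfolding Pr_def by (subst sum.distrib[symmetric]) (intro sum.cong, auto)

lemma Pr_union_bound:
  assumes "finite I"
  shows "Pr (\<lambda>q. \<exists>i\<in>I. P i q) \<le> (\<Sum>i\<in>I. Pr (P i))"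
proof -
  have "Pr (\<lambda>q. \<exists>i\<in>I. P i q) \<le> (\<Sum>p\<in>perms n. \<Sum>i\<in>I. if P i p then m p else 0)"
    unfolding Pr_def
  proof (intro sum_mono)
    fix p
    show "(if \<exists>i\<in>I. P i p then m p else 0) \<le> (\<Sum>i\<in>I. if P i p then m p else 0)"
    proof (cases "\<exists>i\<in>I. P i p")
      case True
      then obtain i where i: "i \<in> I" "P i p" by blast
      have "(\<Sum>i\<in>{i}. if P i p then m p else 0) \<le> (\<Sum>i\<in>I. if P i p then m p else 0)"
        using i assms by (intro sum_mono2) (auto simp: nonneg)
      with True i show ?thesis by simp
    qed (auto intro!: sum_nonneg simp: nonneg)
  qed
  also have "\<dots> = (\<Sum>i\<in>I. Pr (P i))" unfolding Pr_def by (rule sum.swap)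
  finally show ?thesis .
qed

lemma Pr_disjoint_union:
  assumes "finite U"
    and disj: "\<And>q u u'. q \<in> perms n \<Longrightarrow> u \<in> U \<Longrightarrow> u' \<in> U \<Longrightarrow>
      P u q \<Longrightarrow> P u' q \<Longrightarrow> u = u'"
  shows "Pr (\<lambda>q. \<exists>u\<in>U. P u q) = (\<Sum>u\<in>U. Pr (P u))"
proof -
  have "(\<Sum>u\<in>U. if P u p then m p else 0) = (if \<exists>u\<in>U. P u p then m p else 0)"
    if p: "p \<in> perms n" for p
  proof (cases "\<exists>u\<in>U. P u p")
    case True
    then obtain u where u: "u \<in> U" "P u p" ..
    have "\<not> P u' p" if "u' \<in> U - {u}" for u'
      using disj[OF p u(1) _ u(2), of u'] that by auto
    then have "(\<Sum>u\<in>U. if P u p then m p else 0) = (\<Sum>u\<in>{u}. if P u p then m p else 0)"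
      using assms(1) u by (intro sum.mono_neutral_right) auto
    with u show ?thesis by auto
  qed auto
  then have "Pr (\<lambda>q. \<exists>u\<in>U. P u q) = (\<Sum>p\<in>perms n. \<Sum>u\<in>U. if P u p then m p else 0)"
    unfolding Pr_def by simp
  also have "\<dots> = (\<Sum>u\<in>U. Pr (P u))" unfolding Pr_def by (rule sum.swap)
  finally show ?thesis .
qed

lemma Pr_conj:
  assumes w: "w \<in> perms n"
  shows "Pr (\<lambda>q. P (inv w \<circ> q \<circ> w)) = Pr P"
proof -
  have wp: "w permutes {0..<n}" using w by (simp add: perms_def)
  have "bij_betw (\<lambda>p. inv w \<circ> p \<circ> w) (perms n) (perms n)"
  proof (rule bij_betw_byWitness[where f' = "\<lambda>p. w \<circ> p \<circ> inv w"])
    have "inv w \<in> perms n" using permutes_inv[OF wp] by (simp add: perms_def)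
    then show "(\<lambda>p. inv w \<circ> p \<circ> w) ` perms n \<subseteq> perms n" "(\<lambda>p. w \<circ> p \<circ> inv w) ` perms n \<subseteq> perms n"
      using conj_in_perms[OF w] conj_in_perms[of "inv w"] permutes_inv_inv[OF wp] by auto
  qed (auto simp: fun_eq_iff permutes_inverses[OF wp])
  then have "Pr P = (\<Sum>p\<in>perms n. if P (inv w \<circ> p \<circ> w) then m (inv w \<circ> p \<circ> w) else 0)"
    unfolding Pr_def by (rule sum.reindex_bij_betw[symmetric, where h = "\<lambda>p. inv w \<circ> p \<circ> w"])
  also have "\<dots> = Pr (\<lambda>q. P (inv w \<circ> q \<circ> w))"
    unfolding Pr_def by (intro sum.cong refl) (simp add: conj[OF w])
  finally show ?thesis by simp
qed

lemma Pr_Chebyshev: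
  assumes "\<epsilon> > 0"
  shows "Pr (\<lambda>q. \<bar>Y q - c\<bar> > \<epsilon>) \<le> E (\<lambda>q. (Y q - c)\<^sup>2) / \<epsilon>\<^sup>2"
proof -
  have "(if \<bar>Y p - c\<bar> > \<epsilon> then m p else 0) \<le> m p * ((Y p - c)\<^sup>2 / \<epsilon>\<^sup>2)" for p
  proof (cases "\<bar>Y p - c\<bar> > \<epsilon>")
    case True
    then have "\<epsilon>\<^sup>2 \<le> \<bar>Y p - c\<bar>\<^sup>2" using assms by (intro power_mono) auto
    then have "1 \<le> (Y p - c)\<^sup>2 / \<epsilon>\<^sup>2" using assms by simp
    then have "m p * 1 \<le> m p * ((Y p - c)\<^sup>2 / \<epsilon>\<^sup>2)" by (intro mult_left_mono) (simp_all add: nonneg)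
    with True show ?thesis by simp
  qed (simp add: nonneg)
  then have "Pr (\<lambda>q. \<bar>Y q - c\<bar> > \<epsilon>) \<le> (\<Sum>p\<in>perms n. m p * ((Y p - c)\<^sup>2 / \<epsilon>\<^sup>2))"
    unfolding Pr_def by (intro sum_mono)
  also have "\<dots> = E (\<lambda>q. (Y q - c)\<^sup>2) / \<epsilon>\<^sup>2"
    by (simp add: E_def sum_divide_distrib)
  finally show ?thesis .
qed

lemma E_card_eq_sum_Pr:
  assumes "finite A"
  shows "E (\<lambda>q. real (card {f \<in> A. P f q})) = (\<Sum>f\<in>A. Pr (P f))"
proof -
  have "m p * real (card {f \<in> A. P f p}) = (\<Sum>f\<in>A. if P f p then m p else 0)" for p
    using assms by (simp add: sum.inter_filter[symmetric])
  then have "E (\<lambda>q. real (card {f \<in> A. P f q})) = (\<Sum>p\<in>perms n. \<Sum>f\<in>A. if P f p then m p else 0)"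
    by (simp add: E_def)
  also have "\<dots> = (\<Sum>f\<in>A. Pr (P f))" unfolding Pr_def by (rule sum.swap)
  finally show ?thesis .
qed

lemma E_card_squared_eq_sum_Pr:
  assumes "finite A"
  shows "E (\<lambda>q. (real (card {f \<in> A. P f q}))\<^sup>2) = (\<Sum>f\<in>A. \<Sum>g\<in>A. Pr (\<lambda>q. P f q \<and> P g q))"
proof -
  have "m p * (real (card {f \<in> A. P f p}))\<^sup>2 = (\<Sum>f\<in>A. \<Sum>g\<in>A. if P f p \<and> P g p then m p else 0)" for p
  proof -
    have card: "real (card {f \<in> A. P f p}) = (\<Sum>f\<in>A. if P f p then 1 else 0)"
      using assms by (simp add: sum.inter_filter[symmetric])
    have "(real (card {f \<in> A. P f p}))\<^sup>2
        = (\<Sum>f\<in>A. \<Sum>g\<in>A. (if P f p then 1 else 0) * (if P g p then 1 else (0::real)))"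
      unfolding power2_eq_square card by (rule sum_product)
    also have "\<dots> = (\<Sum>f\<in>A. \<Sum>g\<in>A. if P f p \<and> P g p then 1 else 0)"
      by (intro sum.cong refl) simp
    finally show ?thesis by (simp add: sum_distrib_left if_distrib cong: if_cong)
  qed
  then have "E (\<lambda>q. (real (card {f \<in> A. P f q}))\<^sup>2)
      = (\<Sum>p\<in>perms n. \<Sum>f\<in>A. \<Sum>g\<in>A. if P f p \<and> P g p then m p else 0)"
    by (simp add: E_def)
  also have "\<dots> = (\<Sum>f\<in>A. \<Sum>p\<in>perms n. \<Sum>g\<in>A. if P f p \<and> P g p then m p else 0)"
    by (rule sum.swap)
  also have "\<dots> = (\<Sum>f\<in>A. \<Sum>g\<in>A. Pr (\<lambda>q. P f q \<and> P g q))"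
    unfolding Pr_def by (intro sum.cong refl sum.swap)
  finally show ?thesis .
qed

lemma E_square_deviation:
  assumes "C \<noteq> 0"
  shows "E (\<lambda>q. (Y q / C - c)\<^sup>2) = E (\<lambda>q. (Y q)\<^sup>2) * (1 / C\<^sup>2) - E Y * (2 * c / C) + c\<^sup>2"
proof -
  have "E (\<lambda>q. (Y q / C - c)\<^sup>2)
      = (\<Sum>p\<in>perms n. m p * (Y p)\<^sup>2 * (1 / C\<^sup>2) - m p * Y p * (2 * c / C) + m p * c\<^sup>2)"
    unfolding E_def using assms by (intro sum.cong refl) (simp add: field_simps power2_eq_square)
  also have "\<dots> = (\<Sum>p\<in>perms n. m p * (Y p)\<^sup>2) * (1 / C\<^sup>2) - (\<Sum>p\<in>perms n. m p * Y p) * (2 * c / C)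
      + (\<Sum>p\<in>perms n. m p) * c\<^sup>2"
    by (simp only: sum.distrib sum_subtractf sum_distrib_right)
  finally show ?thesis by (simp add: E_def sum_eq_1)
qed

end

subsection \<open>Increasing index tuples\<close>

lemma finite_incr_tuples [simp]: "finite (incr_tuples n k)"
  unfolding incr_tuples_def by (rule finite_subset[OF _ finite_PiE[of "{0..<k}" "\<lambda>_. {0..<n}"]]) auto

lemma incr_tuples_image:
  assumes "f \<in> incr_tuples n k"
  shows "inj_on f {0..<k}" "f ` {0..<k} \<subseteq> {0..<n}" "card (f ` {0..<k}) = k"
  using assms strict_mono_on_imp_inj_on card_image
  by (fastforce simp: incr_tuples_def)+

lemma incr_tuples_eqI:
  assumes f: "f \<in> incr_tuples n k" and g: "g \<in> incr_tuples n k" and img: "f ` {0..<k} = g ` {0..<k}"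
  shows "f = g"
proof -
  have sorted: "sorted_wrt (<) (map h [0..<k])" if "h \<in> incr_tuples n k" for h
    using that by (auto simp: incr_tuples_def sorted_wrt_iff_nth_less intro: strict_mono_onD)
  have "map f [0..<k] = map g [0..<k]"
    by (rule strict_sorted_equal) (use sorted[OF f] sorted[OF g] img in auto)
  then show ?thesis
    using f g by (auto simp: incr_tuples_def intro: PiE_ext)
qed

lemma incr_tuple_enumerating:
  assumes "A \<subseteq> {0..<n}" "card A = k"
  obtains f where "f \<in> incr_tuples n k" "f ` {0..<k} = A"
proof -
  have "finite A" using assms(1) finite_subset by blast
  define xs where "xs = sorted_list_of_set A"
  have sx: "sorted_wrt (<) xs" and setx: "set xs = A" and lx: "length xs = k"
    using \<open>finite A\<close> assms by (auto simp: xs_def)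
  define f where "f i = (if i < k then xs ! i else undefined)" for i
  have img: "f ` {0..<k} = A"
    using lx setx by (auto simp: f_def set_conv_nth image_def)
  have "f \<in> incr_tuples n k"
    using img assms(1) sx lx
    by (auto simp: incr_tuples_def f_def sorted_wrt_iff_nth_less intro!: strict_mono_onI)
  then show thesis using img by (rule that)
qed

lemma card_incr_tuples: "card (incr_tuples n k) = n choose k"
proof -
  have "bij_betw (\<lambda>f. f ` {0..<k}) (incr_tuples n k) {A. A \<subseteq> {0..<n} \<and> card A = k}"
    unfolding bij_betw_def
  proof
    show "inj_on (\<lambda>f. f ` {0..<k}) (incr_tuples n k)" by (auto intro: inj_onI incr_tuples_eqI)
    show "(\<lambda>f. f ` {0..<k}) ` incr_tuples n k = {A. A \<subseteq> {0..<n} \<and> card A = k}"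
    proof (intro subset_antisym subsetI)
      fix A assume "A \<in> {A. A \<subseteq> {0..<n} \<and> card A = k}"
      then have "A \<subseteq> {0..<n}" "card A = k" by auto
      then obtain f where "f \<in> incr_tuples n k" "f ` {0..<k} = A"
        by (rule incr_tuple_enumerating)
      then show "A \<in> (\<lambda>f. f ` {0..<k}) ` incr_tuples n k" by blast
    qed (use incr_tuples_image(2,3) in fastforce)
  qed
  then show ?thesis using n_subsets[of "{0..<n}" k] by (simp add: bij_betw_same_card)
qed

lemma card_incr_tuples_containing:
  assumes "j < n" "k \<ge> 1"
  shows "card {g \<in> incr_tuples n k. j \<in> g ` {0..<k}} \<le> (n - 1) choose (k - 1)"
proof -
  let ?T = "{B. B \<subseteq> {0..<n} - {j} \<and> card B = k - 1}"
  have "card {g \<in> incr_tuples n k. j \<in> g ` {0..<k}} \<le> card ?T"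
  proof (rule card_inj_on_le[where f = "\<lambda>g. g ` {0..<k} - {j}"])
    show "inj_on (\<lambda>g. g ` {0..<k} - {j}) {g \<in> incr_tuples n k. j \<in> g ` {0..<k}}"
    proof (rule inj_onI)
      fix g g' assume g: "g \<in> {g \<in> incr_tuples n k. j \<in> g ` {0..<k}}"
        and g': "g' \<in> {g \<in> incr_tuples n k. j \<in> g ` {0..<k}}"
        and eq: "g ` {0..<k} - {j} = g' ` {0..<k} - {j}"
      then have "g ` {0..<k} = g' ` {0..<k}" by (metis insert_Diff mem_Collect_eq)
      with g g' show "g = g'" by (auto intro: incr_tuples_eqI)
    qed
    show "(\<lambda>g. g ` {0..<k} - {j}) ` {g \<in> incr_tuples n k. j \<in> g ` {0..<k}} \<subseteq> ?T"
      using incr_tuples_image(2,3) by (fastforce simp: card_Diff_singleton)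
  qed simp
  also have "card ?T = (n - 1) choose (k - 1)"
    using n_subsets[of "{0..<n} - {j}" "k - 1"] assms by simp
  finally show ?thesis .
qed

lemma card_incr_tuples_overlapping:
  assumes f: "f \<in> incr_tuples n k" and k: "k \<ge> 1"
  shows "real (card {g \<in> incr_tuples n k. f ` {0..<k} \<inter> g ` {0..<k} \<noteq> {}})
    \<le> real k ^ 2 * real (n choose k) / real n"
proof -
  have fa: "f a < n" if "a < k" for a using incr_tuples_image(2)[OF f] that by (auto simp: image_subset_iff)
  have "card {g \<in> incr_tuples n k. f ` {0..<k} \<inter> g ` {0..<k} \<noteq> {}}
      \<le> card (\<Union>a\<in>{0..<k}. {g \<in> incr_tuples n k. f a \<in> g ` {0..<k}})"
    by (rule card_mono) auto
  also have "\<dots> \<le> (\<Sum>a\<in>{0..<k}. card {g \<in> incr_tuples n k. f a \<in> g ` {0..<k}})"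
    by (rule card_UN_le) simp
  also have "\<dots> \<le> (\<Sum>a\<in>{0..<k}. (n - 1) choose (k - 1))"
    using fa k by (intro sum_mono card_incr_tuples_containing) auto
  finally have "real (card {g \<in> incr_tuples n k. f ` {0..<k} \<inter> g ` {0..<k} \<noteq> {}})
      \<le> real k * real ((n - 1) choose (k - 1))"
    by (simp flip: of_nat_mult)
  moreover have "n > 0" using fa[of 0] k by simp
  moreover have "real k * real (n choose k) = real n * real ((n - 1) choose (k - 1))"
    using binomial_absorption[of "k - 1" n] k by (simp flip: of_nat_mult)
  ultimately show ?thesis by (simp add: field_simps power2_eq_square)
qed

context conj_inv_weights
begin

definition fixed_prob :: real where
  "fixed_prob = Pr (\<lambda>q. q 0 = 0)"

definition point_bound :: real where
  "point_bound = fixed_prob + 1 / (real n - 1)"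

lemma Pr_fixed_eq:
  assumes "x < n" "y < n"
  shows "Pr (\<lambda>q. q x = x) = Pr (\<lambda>q. q y = y)"
proof -
  define w where "w = Transposition.transpose x y"
  have w: "w \<in> perms n" using assms by (auto simp: w_def perms_def intro: permutes_swap_id)
  have "Pr (\<lambda>q. q y = y) = Pr (\<lambda>q. (inv w \<circ> q \<circ> w) y = y)"
    using Pr_conj[OF w, of "\<lambda>q. q y = y"] by simp
  also have "\<dots> = Pr (\<lambda>q. q x = x)"
    by (intro Pr_cong) (auto simp: w_def transpose_eq_iff)
  finally show ?thesis by simp
qed

lemma Pr_moves_eq:
  assumes "x < n" "y < n" "y' < n" "x \<noteq> y" "x \<noteq> y'"
  shows "Pr (\<lambda>q. q x = y) = Pr (\<lambda>q. q x = y')"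
proof -
  define w where "w = Transposition.transpose y y'"
  have w: "w \<in> perms n" using assms by (auto simp: w_def perms_def intro: permutes_swap_id)
  have "Pr (\<lambda>q. q x = y') = Pr (\<lambda>q. (inv w \<circ> q \<circ> w) x = y')"
    using Pr_conj[OF w, of "\<lambda>q. q x = y'"] by simp
  also have "\<dots> = Pr (\<lambda>q. q x = y)"
    using assms by (intro Pr_cong) (auto simp: w_def transpose_eq_iff)
  finally show ?thesis by simp
qed

lemma Pr_moves_le:
  assumes "x < n" "y < n" "x \<noteq> y"
  shows "Pr (\<lambda>q. q x = y) \<le> 1 / (real n - 1)"
proof -
  let ?Y = "{0..<n} - {x}"
  have "(\<Sum>y'\<in>?Y. Pr (\<lambda>q. q x = y)) = (\<Sum>y'\<in>?Y. Pr (\<lambda>q. q x = y'))"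
    using Pr_moves_eq[OF assms(1,2) _ assms(3)] by (intro sum.cong refl) auto
  also have "\<dots> = Pr (\<lambda>q. \<exists>y'\<in>?Y. q x = y')"
    by (intro Pr_disjoint_union[symmetric]) auto
  also have "\<dots> \<le> 1" by (rule Pr_le_1)
  finally have "real (card ?Y) * Pr (\<lambda>q. q x = y) \<le> 1" by simp
  moreover have "real (card ?Y) = real n - 1" using assms by simp
  moreover have "real n - 1 > 0" using assms by simp
  ultimately show ?thesis by (simp add: field_simps)
qed

lemma fixed_prob_eq_E:
  assumes "n \<ge> 1"
  shows "fixed_prob = E (\<lambda>p. real (fixed_points n p) / real n)"
proof -
  have "(\<Sum>x\<in>{0..<n}. Pr (\<lambda>q. q x = x)) = (\<Sum>x\<in>{0..<n}. fixed_prob)"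
    unfolding fixed_prob_def by (intro sum.cong refl Pr_fixed_eq) (use assms in auto)
  then have "real n * fixed_prob = (\<Sum>x\<in>{0..<n}. Pr (\<lambda>q. q x = x))" by simp
  also have "\<dots> = E (\<lambda>p. real (fixed_points n p))"
    using E_card_eq_sum_Pr[of "{0..<n}" "\<lambda>x q. q x = x"] by (simp add: fixed_points_def)
  finally show ?thesis using assms by (simp add: E_def sum_divide_distrib[symmetric] field_simps)
qed

lemma point_bound_nonneg: "n \<ge> 2 \<Longrightarrow> point_bound \<ge> 0"
  unfolding point_bound_def fixed_prob_def using Pr_nonneg[of "\<lambda>q. q 0 = 0"] by simp

lemma Pr_point_le:
  assumes "x < n" "y < n" "n \<ge> 2"
  shows "Pr (\<lambda>q. q x = y) \<le> point_bound"
proof (cases "x = y")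
  case True
  then have "Pr (\<lambda>q. q x = y) = fixed_prob"
    using Pr_fixed_eq[of y 0] assms by (simp add: fixed_prob_def)
  then show ?thesis using assms by (simp add: point_bound_def)
next
  case False
  have "Pr (\<lambda>q. q x = y) \<le> 1 / (real n - 1)" by (rule Pr_moves_le[OF assms(1,2) False])
  moreover have "fixed_prob \<ge> 0" by (simp add: fixed_prob_def Pr_nonneg)
  ultimately show ?thesis unfolding point_bound_def by linarith
qed

lemma Pr_not_maps_outside_le:
  assumes "X \<subseteq> {0..<n}" "n \<ge> 2"
  shows "Pr (\<lambda>q. \<not> maps_outside X q) \<le> real (card X) ^ 2 * point_bound"
proof -
  have "finite X" using assms finite_subset by blast
  have "Pr (\<lambda>q. \<not> maps_outside X q) = Pr (\<lambda>q. \<exists>z\<in>X \<times> X. q (fst z) = snd z)"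
    by (intro Pr_cong) (auto simp: maps_outside_def)
  also have "\<dots> \<le> (\<Sum>z\<in>X \<times> X. Pr (\<lambda>q. q (fst z) = snd z))"
    using \<open>finite X\<close> by (intro Pr_union_bound) auto
  also have "\<dots> \<le> (\<Sum>z\<in>X \<times> X. point_bound)"
    using assms by (intro sum_mono Pr_point_le) auto
  also have "\<dots> = real (card X) ^ 2 * point_bound"
    by (simp add: card_cartesian_product power2_eq_square)
  finally show ?thesis .
qed

text \<open>Conjugating by a permutation of the positions \<open>f ` {0..<k}\<close> reorders the values of a
  permutation mapping \<open>X\<close> outside itself at these positions, turning pattern \<open>u'\<close> into \<open>u\<close>.\<close>

lemma Pr_order_pattern_maps_outside_eq:
  assumes f: "strict_mono_on {0..<k} f" and FX: "f ` {0..<k} \<subseteq> X" and Xn: "X \<subseteq> {0..<n}"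
    and R: "\<And>w q. w permutes f ` {0..<k} \<Longrightarrow> maps_outside X q \<Longrightarrow> R (inv w \<circ> q \<circ> w) = R q"
    and u: "u \<in> perms k" and u': "u' \<in> perms k"
  shows "Pr (\<lambda>q. order_pattern k f u q \<and> R q \<and> maps_outside X q)
       = Pr (\<lambda>q. order_pattern k f u' q \<and> R q \<and> maps_outside X q)"
proof -
  have up: "u permutes {0..<k}" and u'p: "u' permutes {0..<k}" using u u' by (auto simp: perms_def)
  define t where "t = inv u' \<circ> u"
  have t: "t permutes {0..<k}" unfolding t_def by (intro permutes_compose up permutes_inv u'p)
  have u_eq: "u = u' \<circ> t" by (simp add: t_def fun_eq_iff permutes_inverses(1)[OF u'p])
  obtain w where wF: "w permutes f ` {0..<k}" and wf: "\<And>a. a < k \<Longrightarrow> w (f a) = f (t a)"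
    using exists_permutes_image_extending[OF strict_mono_on_imp_inj_on[OF f] t] by auto
  have wX: "w permutes X" using permutes_subset[OF wF FX] .
  have w: "w \<in> perms n" using permutes_subset[OF wX Xn] by (simp add: perms_def)
  have pattern_conj: "order_pattern k f u (inv w \<circ> q \<circ> w) \<longleftrightarrow> order_pattern k f u' q"
    if q: "maps_outside X q" for q
  proof -
    have "(inv w \<circ> q \<circ> w) (f a) = q (w (f a))" if "a < k" for a
      using that FX by (intro conj_apply_maps_outside[OF wF FX q]) auto
    then have "(inv w \<circ> q \<circ> w) (f a) = (q \<circ> (f \<circ> t)) a" if "a < k" for a
      using that wf by simp
    then have "order_pattern k f u (inv w \<circ> q \<circ> w) \<longleftrightarrow> order_pattern k (f \<circ> t) (u' \<circ> t) q"
      unfolding order_pattern_def u_eq by simp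
    then show ?thesis using order_pattern_reindex[OF t] by simp
  qed
  have "Pr (\<lambda>q. order_pattern k f u' q \<and> R q \<and> maps_outside X q)
      = Pr (\<lambda>q. order_pattern k f u (inv w \<circ> q \<circ> w) \<and> R (inv w \<circ> q \<circ> w)
               \<and> maps_outside X (inv w \<circ> q \<circ> w))"
    using pattern_conj R[OF wF] maps_outside_conj[OF wX] by (intro Pr_cong) auto
  also have "\<dots> = Pr (\<lambda>q. order_pattern k f u q \<and> R q \<and> maps_outside X q)"
    by (rule Pr_conj[OF w])
  finally show ?thesis by simp
qed

lemma fact_mult_Pr_order_pattern_maps_outside:
  assumes f: "strict_mono_on {0..<k} f" and FX: "f ` {0..<k} \<subseteq> X" and Xn: "X \<subseteq> {0..<n}"
    and R: "\<And>w q. w permutes f ` {0..<k} \<Longrightarrow> maps_outside X q \<Longrightarrow> R (inv w \<circ> q \<circ> w) = R q"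
    and v: "v \<in> perms k"
  shows "fact k * Pr (\<lambda>q. order_pattern k f v q \<and> R q \<and> maps_outside X q)
       = Pr (\<lambda>q. R q \<and> maps_outside X q)"
proof -
  have "Pr (\<lambda>q. R q \<and> maps_outside X q)
      = Pr (\<lambda>q. \<exists>u\<in>perms k. order_pattern k f u q \<and> R q \<and> maps_outside X q)"
  proof (rule Pr_cong)
    fix q assume "q \<in> perms n"
    then have "inj_on (q \<circ> f) {0..<k}"
      using strict_mono_on_imp_inj_on[OF f] permutes_inj[of q "{0..<n}"]
      by (auto simp: perms_def intro: comp_inj_on inj_on_subset)
    then have "\<exists>u\<in>perms k. \<forall>a<k. \<forall>b<k. (q \<circ> f) a < (q \<circ> f) b \<longleftrightarrow> u a < u b"
      by (rule exists_perm_same_order)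
    then obtain u where "u \<in> perms k" "order_pattern k f u q"
      by (auto simp: order_pattern_def)
    then show "R q \<and> maps_outside X q \<longleftrightarrow> (\<exists>u\<in>perms k. order_pattern k f u q \<and> R q \<and> maps_outside X q)"
      by blast
  qed
  also have "\<dots> = (\<Sum>u\<in>perms k. Pr (\<lambda>q. order_pattern k f u q \<and> R q \<and> maps_outside X q))"
  proof (rule Pr_disjoint_union)
    fix q u u' assume "u \<in> perms k" "u' \<in> perms k"
      "order_pattern k f u q \<and> R q \<and> maps_outside X q" "order_pattern k f u' q \<and> R q \<and> maps_outside X q"
    then show "u = u'" by (intro perms_eq_if_same_order) (auto simp: order_pattern_def)
  qed simp
  also have "\<dots> = (\<Sum>u\<in>perms k. Pr (\<lambda>q. order_pattern k f v q \<and> R q \<and> maps_outside X q))"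
  proof (rule sum.cong[OF refl])
    fix u assume "u \<in> perms k"
    show "Pr (\<lambda>q. order_pattern k f u q \<and> R q \<and> maps_outside X q)
        = Pr (\<lambda>q. order_pattern k f v q \<and> R q \<and> maps_outside X q)"
      by (rule Pr_order_pattern_maps_outside_eq[where R = R, OF f FX Xn R \<open>u \<in> perms k\<close> v])
  qed
  also have "\<dots> = fact k * Pr (\<lambda>q. order_pattern k f v q \<and> R q \<and> maps_outside X q)"
    by (simp add: card_perms)
  finally show ?thesis by simp
qed

lemma Pr_order_pattern_ge:
  assumes f: "f \<in> incr_tuples n k" and v: "v \<in> perms k" and n: "n \<ge> 2"
  shows "Pr (order_pattern k f v) \<ge> (1 - real k ^ 2 * point_bound) / fact k"
proof -
  define F where "F = f ` {0..<k}"
  have Fn: "F \<subseteq> {0..<n}" and cF: "card F = k"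
    using incr_tuples_image[OF f] by (auto simp: F_def)
  have "1 - real k ^ 2 * point_bound \<le> 1 - Pr (\<lambda>q. \<not> maps_outside F q)"
    using Pr_not_maps_outside_le[OF Fn n] cF by simp
  also have "\<dots> = Pr (maps_outside F)"
    using Pr_split[of "\<lambda>_. True" "maps_outside F"] Pr_True by simp
  also have "\<dots> = fact k * Pr (\<lambda>q. order_pattern k f v q \<and> maps_outside F q)"
    using fact_mult_Pr_order_pattern_maps_outside[of k f F "\<lambda>_. True" v] f Fn v
    by (simp add: F_def incr_tuples_def)
  also have "\<dots> \<le> fact k * Pr (order_pattern k f v)"
    by (intro mult_left_mono Pr_mono) auto
  finally show ?thesis by (simp add: field_simps)
qed

lemma Pr_two_order_patterns_le:
  assumes f: "f \<in> incr_tuples n k" and g: "g \<in> incr_tuples n k"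
    and disj: "f ` {0..<k} \<inter> g ` {0..<k} = {}" and v: "v \<in> perms k" and n: "n \<ge> 2"
  shows "Pr (\<lambda>q. order_pattern k f v q \<and> order_pattern k g v q) \<le> 1 / (fact k)\<^sup>2 + 4 * real k ^ 2 * point_bound"
proof -
  define X where "X = f ` {0..<k} \<union> g ` {0..<k}"
  have smf: "strict_mono_on {0..<k} f" and smg: "strict_mono_on {0..<k} g"
    using f g by (auto simp: incr_tuples_def)
  have Xn: "X \<subseteq> {0..<n}" using incr_tuples_image(2)[OF f] incr_tuples_image(2)[OF g] by (auto simp: X_def)
  have cX: "card X \<le> 2 * k"
    using card_Un_le[of "f ` {0..<k}" "g ` {0..<k}"] incr_tuples_image(3)[OF f] incr_tuples_image(3)[OF g]
    by (simp add: X_def)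
  have g_inv: "order_pattern k g v (inv w \<circ> q \<circ> w) = order_pattern k g v q"
    if w: "w permutes f ` {0..<k}" and q: "maps_outside X q" for w q
  proof -
    have "(inv w \<circ> q \<circ> w) (g b) = q (g b)" if "b < k" for b
    proof -
      have "g b \<in> g ` {0..<k}" using that by simp
      then have "g b \<notin> f ` {0..<k}" using disj by blast
      then have "w (g b) = g b" using permutes_not_in[OF w] by simp
      moreover have "(inv w \<circ> q \<circ> w) (g b) = q (w (g b))"
        using that by (intro conj_apply_maps_outside[OF w _ q]) (auto simp: X_def)
      ultimately show ?thesis by simp
    qed
    then show ?thesis unfolding order_pattern_def by simp
  qed
  have "fact k * Pr (\<lambda>q. order_pattern k g v q \<and> maps_outside X q) \<le> 1"
    using fact_mult_Pr_order_pattern_maps_outside[where R = "\<lambda>_. True", OF smg _ Xn _ v] Pr_le_1[of "maps_outside X"]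
    by (simp add: X_def)
  then have "fact k * (fact k * Pr (\<lambda>q. order_pattern k f v q \<and> order_pattern k g v q \<and> maps_outside X q)) \<le> 1"
    using fact_mult_Pr_order_pattern_maps_outside[where R = "order_pattern k g v", OF smf _ Xn g_inv v] by (simp add: X_def)
  then have generic: "Pr (\<lambda>q. (order_pattern k f v q \<and> order_pattern k g v q) \<and> maps_outside X q) \<le> 1 / (fact k)\<^sup>2"
    by (simp add: field_simps power2_eq_square)
  have "Pr (\<lambda>q. (order_pattern k f v q \<and> order_pattern k g v q) \<and> \<not> maps_outside X q)
      \<le> Pr (\<lambda>q. \<not> maps_outside X q)"
    by (rule Pr_mono) auto
  also have "\<dots> \<le> real (card X) ^ 2 * point_bound" using Pr_not_maps_outside_le[OF Xn n] .
  also have "\<dots> \<le> (2 * real k) ^ 2 * point_bound"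
    using cX point_bound_nonneg[OF n] by (intro mult_right_mono power_mono) auto
  finally have "Pr (\<lambda>q. (order_pattern k f v q \<and> order_pattern k g v q) \<and> \<not> maps_outside X q)
      \<le> 4 * real k ^ 2 * point_bound"
    by (simp add: power_mult_distrib)
  with generic show ?thesis
    using Pr_split[of "\<lambda>q. order_pattern k f v q \<and> order_pattern k g v q" "maps_outside X"] by linarith
qed

lemma sum_Pr_two_order_patterns_le:
  assumes f: "f \<in> incr_tuples n k" and v: "v \<in> perms k" and n: "n \<ge> 2" and k: "k \<ge> 1"
  shows "(\<Sum>g\<in>incr_tuples n k. Pr (\<lambda>q. order_pattern k f v q \<and> order_pattern k g v q))
    \<le> real (n choose k) * (1 / (fact k)\<^sup>2 + 4 * real k ^ 2 * point_bound + real k ^ 2 / real n)"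
proof -
  let ?\<alpha> = "1 / (fact k)\<^sup>2 + 4 * real k ^ 2 * point_bound"
  let ?overlap = "\<lambda>g. f ` {0..<k} \<inter> g ` {0..<k} \<noteq> {}"
  have "(\<Sum>g\<in>incr_tuples n k. Pr (\<lambda>q. order_pattern k f v q \<and> order_pattern k g v q))
      \<le> (\<Sum>g\<in>incr_tuples n k. ?\<alpha> + (if ?overlap g then 1 else 0))"
  proof (intro sum_mono)
    fix g assume g: "g \<in> incr_tuples n k"
    show "Pr (\<lambda>q. order_pattern k f v q \<and> order_pattern k g v q) \<le> ?\<alpha> + (if ?overlap g then 1 else 0)"
    proof (cases "?overlap g")
      case True
      then show ?thesis using Pr_le_1 point_bound_nonneg[OF n] by (simp add: add_increasing)
    qed (use Pr_two_order_patterns_le[OF f g _ v n] in simp)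
  qed
  also have "\<dots> = real (n choose k) * ?\<alpha> + real (card {g \<in> incr_tuples n k. ?overlap g})"
    by (simp add: sum.distrib sum.inter_filter[symmetric] card_incr_tuples)
  also have "\<dots> \<le> real (n choose k) * ?\<alpha> + real k ^ 2 * real (n choose k) / real n"
    using card_incr_tuples_overlapping[OF f k] by simp
  finally show ?thesis by (simp add: algebra_simps)
qed

lemma E_pattern_count_ge:
  assumes v: "v \<in> perms k" and n: "n \<ge> 2"
  shows "E (\<lambda>q. real (pattern_count k v n q)) \<ge> real (n choose k) * ((1 - real k ^ 2 * point_bound) / fact k)"
proof -
  have "E (\<lambda>q. real (pattern_count k v n q)) = (\<Sum>f\<in>incr_tuples n k. Pr (order_pattern k f v))"
    unfolding pattern_count_eq_card by (rule E_card_eq_sum_Pr) simp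
  also have "\<dots> \<ge> (\<Sum>f\<in>incr_tuples n k. (1 - real k ^ 2 * point_bound) / fact k)"
    by (intro sum_mono Pr_order_pattern_ge v n)
  finally show ?thesis by (simp add: card_incr_tuples)
qed

lemma E_pattern_count_squared_le:
  assumes v: "v \<in> perms k" and n: "n \<ge> 2" and k: "k \<ge> 1"
  shows "E (\<lambda>q. (real (pattern_count k v n q))\<^sup>2)
    \<le> (real (n choose k))\<^sup>2 * (1 / (fact k)\<^sup>2 + 4 * real k ^ 2 * point_bound + real k ^ 2 / real n)"
proof -
  have "E (\<lambda>q. (real (pattern_count k v n q))\<^sup>2)
      = (\<Sum>f\<in>incr_tuples n k. \<Sum>g\<in>incr_tuples n k. Pr (\<lambda>q. order_pattern k f v q \<and> order_pattern k g v q))"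
    unfolding pattern_count_eq_card by (rule E_card_squared_eq_sum_Pr) simp
  also have "\<dots> \<le> (\<Sum>f\<in>incr_tuples n k.
      real (n choose k) * (1 / (fact k)\<^sup>2 + 4 * real k ^ 2 * point_bound + real k ^ 2 / real n))"
    by (intro sum_mono sum_Pr_two_order_patterns_le v n k)
  finally show ?thesis by (simp add: card_incr_tuples power2_eq_square mult.assoc)
qed

lemma E_pattern_density_deviation_squared_le:
  assumes v: "v \<in> perms k" and n: "n \<ge> 2" and k: "k \<ge> 1" "k \<le> n"
  shows "E (\<lambda>q. (real (pattern_count k v n q) / real (n choose k) - 1 / fact k)\<^sup>2)
    \<le> 6 * real k ^ 2 * point_bound + real k ^ 2 / real n"
proof -
  define C where "C = real (n choose k)"
  define c where "c = 1 / (fact k :: real)"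
  define N where "N = (\<lambda>q. real (pattern_count k v n q))"
  have C: "C > 0" using k by (simp add: C_def)
  have c: "0 < c" "c \<le> 1" by (auto simp: c_def)
  have first: "E N * (2 * c / C) \<ge> 2 * c\<^sup>2 * (1 - real k ^ 2 * point_bound)"
  proof -
    have "C * (c * (1 - real k ^ 2 * point_bound)) \<le> E N"
      using E_pattern_count_ge[OF v n] unfolding N_def by (simp add: C_def c_def)
    then have "C * (c * (1 - real k ^ 2 * point_bound)) * (2 * c / C) \<le> E N * (2 * c / C)"
      using C c by (intro mult_right_mono) auto
    moreover have "C * (c * (1 - real k ^ 2 * point_bound)) * (2 * c / C) = 2 * c\<^sup>2 * (1 - real k ^ 2 * point_bound)"
      using C by (simp add: field_simps power2_eq_square)
    ultimately show ?thesis by simp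
  qed
  have "E (\<lambda>q. (N q)\<^sup>2) \<le> C\<^sup>2 * (c\<^sup>2 + 4 * real k ^ 2 * point_bound + real k ^ 2 / real n)"
    using E_pattern_count_squared_le[OF v n k(1)] unfolding N_def by (simp add: C_def c_def power_divide)
  then have second: "E (\<lambda>q. (N q)\<^sup>2) * (1 / C\<^sup>2) \<le> c\<^sup>2 + 4 * (real k ^ 2 * point_bound) + real k ^ 2 / real n"
    using C by (simp add: field_simps power2_eq_square)
  have "E (\<lambda>q. (N q / C - c)\<^sup>2) = E (\<lambda>q. (N q)\<^sup>2) * (1 / C\<^sup>2) - E N * (2 * c / C) + c\<^sup>2"
    using C by (intro E_square_deviation) simp
  also have "\<dots> \<le> (c\<^sup>2 + 4 * (real k ^ 2 * point_bound) + real k ^ 2 / real n)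
      - 2 * c\<^sup>2 * (1 - real k ^ 2 * point_bound) + c\<^sup>2"
    using first second by linarith
  also have "\<dots> = 4 * (real k ^ 2 * point_bound) + real k ^ 2 / real n + 2 * (c\<^sup>2 * (real k ^ 2 * point_bound))"
    by (simp add: algebra_simps)
  also have "\<dots> \<le> 6 * real k ^ 2 * point_bound + real k ^ 2 / real n"
  proof -
    have "c\<^sup>2 * (real k ^ 2 * point_bound) \<le> real k ^ 2 * point_bound"
      using c point_bound_nonneg[OF n] by (intro mult_left_le_one_le) (auto simp: power_le_one)
    then show ?thesis by (simp add: algebra_simps)
  qed
  finally show ?thesis unfolding N_def C_def c_def .
qed

lemma Pr_pattern_density_deviation_le:
  assumes v: "v \<in> perms k" and n: "n \<ge> 2" and k: "k \<ge> 1" "k \<le> n" and \<epsilon>: "\<epsilon> > 0"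
  shows "Pr (\<lambda>q. \<bar>real (pattern_count k v n q) / real (n choose k) - 1 / fact k\<bar> > \<epsilon>)
    \<le> (6 * real k ^ 2 * point_bound + real k ^ 2 / real n) / \<epsilon>\<^sup>2"
  using order_trans[OF Pr_Chebyshev[OF \<epsilon>] divide_right_mono[OF E_pattern_density_deviation_squared_le[OF v n k]]]
  by simp

end

subsection \<open>The law of a random permutation\<close>

definition law :: "'a measure \<Rightarrow> ('a \<Rightarrow> 'b) \<Rightarrow> 'b \<Rightarrow> real" where
  "law M X p = measure M {x \<in> space M. X x = p}"

locale random_perm =
  fixes M :: "'a measure" and X :: "'a \<Rightarrow> nat \<Rightarrow> nat" and n :: nat
  assumes prob_space: "prob_space M"
    and measurable: "X \<in> M \<rightarrow>\<^sub>M count_space UNIV"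
    and permutes: "\<And>x. x \<in> space M \<Longrightarrow> X x permutes {0..<n}"
    and conj_invariant: "conj_invariant M n X"
begin

lemma sets_pred: "{x \<in> space M. P (X x)} \<in> sets M"
  using measurable_sets[OF measurable, of "{p. P p}"] by (simp add: vimage_def Int_def conj_commute)

lemma emeasure_less_top: "emeasure M A < \<infinity>"
  using finite_measure.emeasure_finite[OF prob_space.finite_measure[OF prob_space]] by (simp add: less_top)

lemma measure_pred_eq_sum: "measure M {x \<in> space M. P (X x)} = (\<Sum>p\<in>{p \<in> perms n. P p}. law M X p)"
proof -
  have "{x \<in> space M. P (X x)} = (\<Union>p\<in>{p \<in> perms n. P p}. {x \<in> space M. X x = p})"
    using permutes by (auto simp: perms_def)
  then show ?thesis unfolding law_def
    using sets_pred emeasure_less_top by (auto simp: disjoint_family_on_def less_top[symmetric] intro!: measure_finite_Union)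
qed

lemma integral_eq_sum: "(\<integral>x. h (X x) \<partial>M) = (\<Sum>p\<in>perms n. h p * law M X p)"
proof -
  have "(\<integral>x. h (X x) \<partial>M) = (\<integral>x. (\<Sum>p\<in>perms n. h p * indicator {x \<in> space M. X x = p} x) \<partial>M)"
  proof (rule Bochner_Integration.integral_cong[OF refl])
    fix x assume x: "x \<in> space M"
    have "X x \<in> perms n" using permutes[OF x] by (simp add: perms_def)
    then have "(\<Sum>p\<in>perms n. h p * indicator {x \<in> space M. X x = p} x)
        = (\<Sum>p\<in>{X x}. h p * indicator {x \<in> space M. X x = p} x)"
      by (intro sum.mono_neutral_right) (auto simp: x indicator_def)
    then show "h (X x) = (\<Sum>p\<in>perms n. h p * indicator {x \<in> space M. X x = p} x)" by (simp add: x)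
  qed
  also have "\<dots> = (\<Sum>p\<in>perms n. \<integral>x. h p * indicator {x \<in> space M. X x = p} x \<partial>M)"
    by (intro Bochner_Integration.integral_sum integrable_mult_right integrable_real_indicator
        sets_pred emeasure_less_top)
  also have "\<dots> = (\<Sum>p\<in>perms n. h p * law M X p)"
    using emeasure_less_top by (intro sum.cong refl) (simp add: law_def sets_pred Int_absorb2)
  finally show ?thesis .
qed

lemma conj_inv_weights_law: "conj_inv_weights n (law M X)"
proof
  show "(\<Sum>p\<in>perms n. law M X p) = 1"
    using measure_pred_eq_sum[of "\<lambda>_. True"] prob_space.prob_space[OF prob_space] by simp
  fix w p assume "w \<in> perms n"
  then have w: "inv w permutes {0..<n}" and "inv (inv w) = w"
    by (auto simp: perms_def permutes_inv permutes_bij inv_inv_eq)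
  then show "law M X (inv w \<circ> p \<circ> w) = law M X p"
    using conj_invariant[unfolded conj_invariant_def, rule_format, OF w, of p] by (simp add: law_def)
qed (simp add: law_def)

lemma measure_pred_eq_Pr: "measure M {x \<in> space M. P (X x)} = conj_inv_weights.Pr n (law M X) P"
  using measure_pred_eq_sum conj_inv_weights.Pr_eq_sum[OF conj_inv_weights_law] by simp

lemma fixed_prob_eq_integral:
  assumes "n \<ge> 1"
  shows "conj_inv_weights.fixed_prob n (law M X) = (\<integral>x. real (fixed_points n (X x)) / real n \<partial>M)"
proof -
  interpret conj_inv_weights n "law M X" by (rule conj_inv_weights_law)
  have "fixed_prob = E (\<lambda>p. real (fixed_points n p) / real n)" by (rule fixed_prob_eq_E[OF assms])
  also have "\<dots> = (\<Sum>p\<in>perms n. real (fixed_points n p) / real n * law M X p)"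
    by (simp add: E_def mult.commute)
  also have "\<dots> = (\<integral>x. real (fixed_points n (X x)) / real n \<partial>M)"
    by (rule integral_eq_sum[symmetric])
  finally show ?thesis .
qed

lemma measure_pattern_density_deviation_le:
  assumes "v permutes {0..<k}" "k \<ge> 1" "k \<le> n" "n \<ge> 2" "\<epsilon> > 0"
  shows "measure M {x \<in> space M.
      \<bar>real (pattern_count k v n (X x)) / real (n choose k) - 1 / fact k\<bar> > \<epsilon>}
    \<le> (6 * real k ^ 2 * (conj_inv_weights.fixed_prob n (law M X) + 2 * (1 / real n))
        + real k ^ 2 * (1 / real n)) / \<epsilon>\<^sup>2"
proof -
  interpret conj_inv_weights n "law M X" by (rule conj_inv_weights_law)
  have "1 / (real n - 1) \<le> 2 * (1 / real n)" using assms(4) by (simp add: field_simps)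
  then have point_bound_le: "point_bound \<le> fixed_prob + 2 * (1 / real n)"
    by (simp add: point_bound_def)
  have "measure M {x \<in> space M.
      \<bar>real (pattern_count k v n (X x)) / real (n choose k) - 1 / fact k\<bar> > \<epsilon>}
    = Pr (\<lambda>q. \<bar>real (pattern_count k v n q) / real (n choose k) - 1 / fact k\<bar> > \<epsilon>)"
    by (rule measure_pred_eq_Pr)
  also have "\<dots> \<le> (6 * real k ^ 2 * point_bound + real k ^ 2 / real n) / \<epsilon>\<^sup>2"
    using assms by (intro Pr_pattern_density_deviation_le) (auto simp: perms_def)
  also have "\<dots> \<le> (6 * real k ^ 2 * (fixed_prob + 2 * (1 / real n)) + real k ^ 2 * (1 / real n)) / \<epsilon>\<^sup>2"
    using point_bound_le by (intro divide_right_mono add_mono mult_left_mono) auto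
  finally show ?thesis .
qed

end

lemma fixed_points_le: "fixed_points n p \<le> n"
proof -
  have "card {i \<in> {0..<n}. p i = i} \<le> card {0..<n}" by (intro card_mono) auto
  then show ?thesis by (simp add: fixed_points_def)
qed

lemma integral_fixed_points_ratio_tendsto_0:
  assumes "prob_space M" and "\<And>n. \<Sigma> n \<in> M \<rightarrow>\<^sub>M count_space UNIV"
    and "AE x in M. (\<lambda>n. real (fixed_points n (\<Sigma> n x)) / real n) \<longlonglongrightarrow> 0"
  shows "(\<lambda>n. \<integral>x. real (fixed_points n (\<Sigma> n x)) / real n \<partial>M) \<longlonglongrightarrow> 0"
proof -
  have "(\<lambda>n. \<integral>x. real (fixed_points n (\<Sigma> n x)) / real n \<partial>M) \<longlonglongrightarrow> (\<integral>x. 0 \<partial>M)"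
  proof (rule integral_dominated_convergence[where w = "\<lambda>_. 1"])
    show "integrable M (\<lambda>_. 1::real)"
      using assms(1) by (simp add: prob_space.finite_measure finite_measure.integrable_const)
    show "AE x in M. norm (real (fixed_points n (\<Sigma> n x)) / real n) \<le> 1" for n
      using fixed_points_le[of n] by (intro AE_I2) (auto simp: divide_le_eq_1)
  qed (use assms(2,3) in \<open>auto intro: measurable_compose_rev[OF _ assms(2)]\<close>)
  then show ?thesis by simp
qed

theorem corollary5p9:
  fixes M :: "'a measure" and \<Sigma> :: "nat \<Rightarrow> 'a \<Rightarrow> nat \<Rightarrow> nat"
  assumes "prob_space M"
    and "\<And>n. \<Sigma> n \<in> M \<rightarrow>\<^sub>M count_space UNIV"
    and "\<And>n x. x \<in> space M \<Longrightarrow> \<Sigma> n x permutes {0..<n}"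
    and "\<And>n. conj_invariant M n (\<Sigma> n)"
    and "AE x in M. (\<lambda>n. real (fixed_points n (\<Sigma> n x)) / real n) \<longlonglongrightarrow> 0"
  shows "\<forall>k\<ge>1. \<forall>v. v permutes {0..<k} \<longrightarrow>
           (\<forall>\<epsilon>>0. (\<lambda>n. measure M {x \<in> space M.
               \<bar>real (pattern_count k v n (\<Sigma> n x)) / real (n choose k) - 1 / fact k\<bar> > \<epsilon>})
             \<longlonglongrightarrow> 0)"
proof (intro allI impI)
  fix k :: nat and v :: "nat \<Rightarrow> nat" and \<epsilon> :: real
  assume k: "k \<ge> 1" and v: "v permutes {0..<k}" and \<epsilon>: "\<epsilon> > 0"
  have rp: "random_perm M (\<Sigma> n) n" for n by (rule random_perm.intro) (use assms in auto)
  define \<rho> where "\<rho> n = conj_inv_weights.fixed_prob n (law M (\<Sigma> n))" for n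
  have "\<forall>\<^sub>F n in sequentially. (\<integral>x. real (fixed_points n (\<Sigma> n x)) / real n \<partial>M) = \<rho> n"
    using eventually_ge_at_top[of 1] by eventually_elim (simp add: \<rho>_def random_perm.fixed_prob_eq_integral[OF rp])
  then have "\<rho> \<longlonglongrightarrow> 0"
    using integral_fixed_points_ratio_tendsto_0[OF assms(1,2,5)] by (rule Lim_transform_eventually[rotated])
  then have bound_0: "(\<lambda>n. (6 * real k ^ 2 * (\<rho> n + 2 * (1 / real n)) + real k ^ 2 * (1 / real n)) / \<epsilon>\<^sup>2) \<longlonglongrightarrow> 0"
    using \<epsilon> by (auto intro!: tendsto_eq_intros lim_1_over_n)
  have upper: "\<forall>\<^sub>F n in sequentially. measure M {x \<in> space M.
      \<bar>real (pattern_count k v n (\<Sigma> n x)) / real (n choose k) - 1 / fact k\<bar> > \<epsilon>}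
      \<le> (6 * real k ^ 2 * (\<rho> n + 2 * (1 / real n)) + real k ^ 2 * (1 / real n)) / \<epsilon>\<^sup>2"
    using eventually_ge_at_top[of "max 2 k"]
  proof eventually_elim
    case (elim n)
    then show ?case unfolding \<rho>_def using k v \<epsilon>
      by (intro random_perm.measure_pattern_density_deviation_le[OF rp]) auto
  qed
  show "(\<lambda>n. measure M {x \<in> space M.
      \<bar>real (pattern_count k v n (\<Sigma> n x)) / real (n choose k) - 1 / fact k\<bar> > \<epsilon>}) \<longlonglongrightarrow> 0"
    by (rule tendsto_sandwich[OF _ upper tendsto_const bound_0]) simp
qed

end
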